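(* Let $D:\mathbb R^2\setminus\{0\}\to\mathbb R$ be nonnegative, bounded and continuously differentiable, and consider $\ddot x+D(x)\dot x=-x/|x|^3$. Let $r_B,T>0$ and let $x_n:[-T,0]\to\mathbb R^2\setminus\{0\}$ be solutions with $r_n(0)=r_B$ and $\dot r_n(0)\to-\infty$, where $r_n=|x_n|$. Then $\dot r_n(t)\to-\infty$ as $n\to+\infty$, uniformly with respect to $t\in[-T,0]$. *)

theory Defs
  imports "HOL-Analysis.Analysis"
begin

definition C1_on_punctured :: "(real^2 \<Rightarrow> real) \<Rightarrow> bool" where
  "C1_on_punctured D \<longleftrightarrow>
     (\<exists>D' :: (real^2) \<Rightarrow> ((real^2) \<Rightarrow>\<^sub>L real).
        (\<forall>z. z \<noteq> 0 \<longrightarrow> (D has_derivative blinfun_apply (D' z)) (at z)) \<and>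
        continuous_on (UNIV - {0}) D')"

definition is_solution ::
  "(real^2 \<Rightarrow> real) \<Rightarrow> real \<Rightarrow> (real \<Rightarrow> real^2) \<Rightarrow> (real \<Rightarrow> real^2) \<Rightarrow> bool" where
  "is_solution D T x v \<longleftrightarrow>
     (\<forall>t\<in>{-T..0}. x t \<noteq> 0 \<and>
        (x has_vector_derivative v t) (at t within {-T..0}) \<and>
        (v has_vector_derivative
            (- (D (x t) *\<^sub>R v t) - (1 / norm (x t) ^ 3) *\<^sub>R x t)) (at t within {-T..0}))"

end

theory Submission
  imports Defs
begin

text \<open>Write \<open>r = |x|\<close> and \<open>r' = (x \<bullet> v) / r\<close> for the radial velocity. Along a solution,
\<open>r'' = (r\<^sup>2 |v|\<^sup>2 - (x \<bullet> v)\<^sup>2) / r\<^sup>3 - D(x) r' - 1 / r\<^sup>2\<close>. The first term is nonnegative by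
Cauchy-Schwarz, and the second is nonnegative while the body falls (\<open>r' \<le> 0\<close>). Going
backwards in time from \<open>t = 0\<close>, as long as \<open>r' < M \<le> 0\<close> the radius can only be larger
than \<open>r(0) = r\<^sub>B\<close>, so \<open>r'' \<ge> -1 / r\<^sub>B\<^sup>2\<close>. Hence \<open>r'\<close> cannot climb from
\<open>r'(0) < M - T / r\<^sub>B\<^sup>2\<close> back up to \<open>M\<close> within time \<open>T\<close>, uniformly in the solution.\<close>

definition radial_velocity :: "(real \<Rightarrow> 'a::real_inner) \<Rightarrow> (real \<Rightarrow> 'a) \<Rightarrow> real \<Rightarrow> real" where
  "radial_velocity x v t = (x t \<bullet> v t) / norm (x t)"

lemma has_real_derivative_norm_compose:
  fixes x :: "real \<Rightarrow> 'a::real_inner"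
  assumes "(x has_vector_derivative v) (at u within S)" and "x u \<noteq> 0"
  shows "((\<lambda>t. norm (x t)) has_real_derivative (x u \<bullet> v) / norm (x u)) (at u within S)"
proof -
  have "((\<lambda>t. norm (x t)) has_derivative (\<lambda>h. h * (v \<bullet> sgn (x u)))) (at u within S)"
    using has_derivative_compose[OF assms(1)[unfolded has_vector_derivative_def]
        has_derivative_norm[OF assms(2)]]
    by (simp add: o_def)
  then show ?thesis
    unfolding has_field_derivative_def
    by (rule has_derivative_eq_rhs) (auto simp: fun_eq_iff sgn_div_norm inner_commute divide_inverse)
qed

lemma has_real_derivative_radial_velocity:
  fixes x v :: "real \<Rightarrow> 'a::real_inner"
  assumes x_deriv: "(x has_vector_derivative v u) (at u within S)"
    and v_deriv: "(v has_vector_derivative a) (at u within S)"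
    and "x u \<noteq> 0"
  shows "(radial_velocity x v has_real_derivative
            (v u \<bullet> v u + x u \<bullet> a) / norm (x u) - (x u \<bullet> v u)\<^sup>2 / norm (x u) ^ 3) (at u within S)"
proof -
  have inner_deriv: "((\<lambda>t. x t \<bullet> v t) has_real_derivative v u \<bullet> v u + x u \<bullet> a) (at u within S)"
    unfolding has_field_derivative_def
    by (rule has_derivative_eq_rhs[OF has_derivative_inner[OF
          x_deriv[unfolded has_vector_derivative_def] v_deriv[unfolded has_vector_derivative_def]]])
      (auto simp: fun_eq_iff algebra_simps)
  have "norm (x u) \<noteq> 0"
    using \<open>x u \<noteq> 0\<close> by simp
  from DERIV_divide[OF inner_deriv has_real_derivative_norm_compose[OF x_deriv \<open>x u \<noteq> 0\<close>] this]
  show ?thesis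
    unfolding radial_velocity_def[abs_def]
    by (rule DERIV_cong) (use \<open>x u \<noteq> 0\<close> in \<open>simp add: field_simps power2_eq_square power3_eq_cube\<close>)
qed

lemma radial_acceleration_ge:
  fixes x v :: "'a::real_inner"
  assumes "0 < \<rho>" and "\<rho> \<le> norm x" and "x \<bullet> v \<le> 0" and "0 \<le> d"
  shows "(v \<bullet> v + x \<bullet> (- (d *\<^sub>R v) - (1 / norm x ^ 3) *\<^sub>R x)) / norm x - (x \<bullet> v)\<^sup>2 / norm x ^ 3
           \<ge> - 1 / \<rho>\<^sup>2"
proof -
  have r: "norm x > 0"
    using assms by linarith
  have "(v \<bullet> v + x \<bullet> (- (d *\<^sub>R v) - (1 / norm x ^ 3) *\<^sub>R x)) / norm x - (x \<bullet> v)\<^sup>2 / norm x ^ 3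
        = ((norm x * norm v)\<^sup>2 - (x \<bullet> v)\<^sup>2) / norm x ^ 3 - d * (x \<bullet> v) / norm x - 1 / (norm x)\<^sup>2"
    using r by (simp add: inner_diff_right power2_norm_eq_inner[symmetric] field_simps
        power2_eq_square power3_eq_cube)
  moreover have "0 \<le> ((norm x * norm v)\<^sup>2 - (x \<bullet> v)\<^sup>2) / norm x ^ 3"
    using power_mono[OF Cauchy_Schwarz_ineq2[of x v] abs_ge_zero, of 2] r by simp
  moreover have "d * (x \<bullet> v) / norm x \<le> 0"
    using assms r by (simp add: mult_nonneg_nonpos divide_nonpos_pos)
  moreover have "1 / (norm x)\<^sup>2 \<le> 1 / \<rho>\<^sup>2"
    using assms by (intro frac_le power_mono) auto
  ultimately show ?thesis
    by linarith
qed

lemma last_time_ge: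
  fixes f :: "real \<Rightarrow> real"
  assumes "continuous_on {t..b} f" and "t \<le> b" and "M \<le> f t"
  obtains s where "s \<in> {t..b}" and "M \<le> f s" and "\<And>u. s < u \<Longrightarrow> u \<le> b \<Longrightarrow> f u < M"
proof -
  define S where "S = {t..b} \<inter> f -` {M..}"
  have "t \<in> S"
    using assms unfolding S_def by auto
  have "closed S"
    unfolding S_def by (rule continuous_closed_preimage) (use assms in auto)
  have "bdd_above S"
    unfolding S_def by (auto intro: bdd_aboveI[where M=b])
  have "Sup S \<in> S"
    using closed_contains_Sup[OF _ \<open>bdd_above S\<close> \<open>closed S\<close>] \<open>t \<in> S\<close> by blast
  moreover have "f u < M" if "Sup S < u" "u \<le> b" for u
  proof (rule ccontr)
    assume "\<not> f u < M"
    then have "u \<in> S"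
      using that \<open>Sup S \<in> S\<close> unfolding S_def by auto
    then show False
      using cSup_upper[OF _ \<open>bdd_above S\<close>] that by fastforce
  qed
  ultimately show ?thesis
    using that unfolding S_def by auto
qed

text \<open>Here \<open>f\<close> plays the radial velocity \<open>r'\<close>; the bound \<open>-c\<close> on \<open>f'\<close> is only available
while \<open>f < M\<close> and \<open>r\<close> has not dropped below \<open>r b\<close>.\<close>

lemma bounded_deceleration_stays_below:
  fixes r f :: "real \<Rightarrow> real"
  assumes f_cont: "continuous_on {a..b} f"
    and r_deriv: "\<And>u. u \<in> {a..b} \<Longrightarrow> (r has_real_derivative f u) (at u within {a..b})"
    and f_deriv: "\<And>u. u \<in> {a..b} \<Longrightarrow> f u < M \<Longrightarrow> r b \<le> r u \<Longrightarrow>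
                    \<exists>d. (f has_real_derivative d) (at u within {a..b}) \<and> - c \<le> d"
    and "M \<le> 0" and "0 \<le> c" and f_b: "f b < M - c * (b - a)" and t: "t \<in> {a..b}"
  shows "f t < M"
proof (rule ccontr)
  assume "\<not> f t < M"
  moreover have "continuous_on {t..b} f"
    using f_cont t by (auto intro: continuous_on_subset)
  ultimately obtain s where s: "s \<in> {t..b}" "M \<le> f s" and below: "\<And>u. s < u \<Longrightarrow> u \<le> b \<Longrightarrow> f u < M"
    using last_time_ge[of t b f M] t by auto
  have at_interior: "at u within {a..b} = at u" if "s < u" "u < b" for u
    using at_within_Icc_at[of a u b] that s t by auto
  have r_cont: "continuous_on {a..b} r"
    unfolding continuous_on_eq_continuous_within using r_deriv DERIV_continuous by blast
  have r_ge: "r b \<le> r u" if "s \<le> u" "u \<le> b" for u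
  proof (rule DERIV_nonpos_imp_decreasing_open[OF \<open>u \<le> b\<close>])
    show "\<exists>y. (r has_real_derivative y) (at w) \<and> y \<le> 0" if "u < w" "w < b" for w
      using r_deriv[of w] below[of w] at_interior[of w] \<open>M \<le> 0\<close> that \<open>s \<le> u\<close> s t
      by (intro exI[of _ "f w"]) auto
    show "continuous_on {u..b} r"
      using continuous_on_subset[OF r_cont] that s t by auto
  qed
  have "f s + c * s \<le> f b + c * b"
  proof (rule DERIV_nonneg_imp_increasing_open[where f="\<lambda>u. f u + c * u"])
    show "\<exists>y. ((\<lambda>u. f u + c * u) has_real_derivative y) (at w) \<and> 0 \<le> y" if "s < w" "w < b" for w
    proof -
      have "w \<in> {a..b}" "f w < M" "r b \<le> r w"
        using below r_ge that s t by auto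
      then obtain d where "(f has_real_derivative d) (at w within {a..b})" "- c \<le> d"
        using f_deriv by blast
      then show ?thesis
        using at_interior[OF that] by (intro exI[of _ "d + c"]) (auto intro!: derivative_eq_intros)
    qed
    show "continuous_on {s..b} (\<lambda>u. f u + c * u)"
      using f_cont s t by (intro continuous_intros) (auto intro: continuous_on_subset)
  qed (use s in auto)
  moreover have "c * (b - s) \<le> c * (b - a)"
    using \<open>0 \<le> c\<close> s t by (intro mult_left_mono) auto
  ultimately show False
    using f_b \<open>M \<le> f s\<close> by (simp add: algebra_simps)
qed

lemma solution_has_norm_derivative:
  assumes "is_solution D T x v" and "u \<in> {-T..0}"
  shows "((\<lambda>t. norm (x t)) has_real_derivative radial_velocity x v u) (at u within {-T..0})"
  using assms has_real_derivative_norm_compose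
  unfolding is_solution_def radial_velocity_def by blast

lemma solution_radial_velocity_deriv:
  assumes "is_solution D T x v" and "u \<in> {-T..0}"
  shows "(radial_velocity x v has_real_derivative
           (v u \<bullet> v u + x u \<bullet> (- (D (x u) *\<^sub>R v u) - (1 / norm (x u) ^ 3) *\<^sub>R x u)) / norm (x u)
             - (x u \<bullet> v u)\<^sup>2 / norm (x u) ^ 3) (at u within {-T..0})"
  using assms has_real_derivative_radial_velocity unfolding is_solution_def by blast

lemma solution_radial_velocity_stays_below:
  assumes D_nonneg: "\<forall>z. z \<noteq> 0 \<longrightarrow> D z \<ge> 0"
    and sol: "is_solution D T x v" and "0 < rB" and r0: "norm (x 0) = rB"
    and "M \<le> 0" and "radial_velocity x v 0 < M - T / rB\<^sup>2" and "t \<in> {-T..0}"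
  shows "radial_velocity x v t < M"
proof (rule bounded_deceleration_stays_below[where a="-T" and b=0 and f="radial_velocity x v"
      and r="\<lambda>t. norm (x t)" and c="1 / rB\<^sup>2"])
  show "continuous_on {-T..0} (radial_velocity x v)"
    unfolding continuous_on_eq_continuous_within
    using solution_radial_velocity_deriv[OF sol] DERIV_continuous by blast
  fix u assume u: "u \<in> {-T..0}"
  then show "((\<lambda>t. norm (x t)) has_real_derivative radial_velocity x v u) (at u within {-T..0})"
    by (rule solution_has_norm_derivative[OF sol])
  assume "radial_velocity x v u < M" and "norm (x 0) \<le> norm (x u)"
  then have "(x u \<bullet> v u) / norm (x u) < 0" and "rB \<le> norm (x u)"
    using \<open>M \<le> 0\<close> r0 unfolding radial_velocity_def by auto
  moreover have "x u \<noteq> 0"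
    using sol u unfolding is_solution_def by blast
  ultimately have "x u \<bullet> v u \<le> 0" and "rB \<le> norm (x u)"
    by (auto simp: divide_less_0_iff)
  then show "\<exists>d. (radial_velocity x v has_real_derivative d) (at u within {-T..0}) \<and> - (1 / rB\<^sup>2) \<le> d"
    using solution_radial_velocity_deriv[OF sol u] radial_acceleration_ge[OF \<open>0 < rB\<close>] D_nonneg \<open>x u \<noteq> 0\<close>
    by fastforce
qed (use assms in auto)

theorem lemma7p1:
  fixes D :: "real^2 \<Rightarrow> real"
    and rB T :: real
    and x v :: "nat \<Rightarrow> real \<Rightarrow> real^2"
    and rd :: "nat \<Rightarrow> real \<Rightarrow> real"
  assumes D_nonneg: "\<forall>z. z \<noteq> 0 \<longrightarrow> D z \<ge> 0"
    and D_bounded: "bounded (D ` (UNIV - {0}))"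
    and D_C1: "C1_on_punctured D"
    and rB_pos: "rB > 0" and T_pos: "T > 0"
    and sol: "\<forall>n. is_solution D T (x n) (v n)"
    and rd_deriv: "\<forall>n. \<forall>t\<in>{-T..0}.
                     ((\<lambda>s. norm (x n s)) has_real_derivative rd n t) (at t within {-T..0})"
    and r0: "\<forall>n. norm (x n 0) = rB"
    and rd0: "filterlim (\<lambda>n. rd n 0) at_bot sequentially"
  shows "\<forall>M. \<exists>N. \<forall>n\<ge>N. \<forall>t\<in>{-T..0}. rd n t \<le> M"
proof
  fix M :: real
  have rd_eq: "rd n t = radial_velocity (x n) (v n) t" if "t \<in> {-T..0}" for n t
  proof (rule vector_derivative_unique_within_closed_interval[of "-T" 0, unfolded cbox_interval])
    show "((\<lambda>s. norm (x n s)) has_vector_derivative rd n t) (at t within {-T..0})"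
      using rd_deriv that by (simp add: has_real_derivative_iff_has_vector_derivative)
    show "((\<lambda>s. norm (x n s)) has_vector_derivative radial_velocity (x n) (v n) t) (at t within {-T..0})"
      using solution_has_norm_derivative[OF sol[rule_format] that]
      by (simp add: has_real_derivative_iff_has_vector_derivative)
  qed (use T_pos that in auto)
  obtain N where N: "\<And>n. N \<le> n \<Longrightarrow> rd n 0 \<le> min M 0 - T / rB\<^sup>2 - 1"
    using rd0 unfolding filterlim_at_bot eventually_sequentially by blast
  have "radial_velocity (x n) (v n) t < min M 0" if "N \<le> n" "t \<in> {-T..0}" for n t
  proof (rule solution_radial_velocity_stays_below[OF D_nonneg sol[rule_format] rB_pos r0[rule_format]])
    show "radial_velocity (x n) (v n) 0 < min M 0 - T / rB\<^sup>2"
      using N[OF \<open>N \<le> n\<close>] rd_eq[of 0 n] T_pos by simp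
  qed (use that in auto)
  then show "\<exists>N. \<forall>n\<ge>N. \<forall>t\<in>{-T..0}. rd n t \<le> M"
    using rd_eq by (metis less_imp_le min.strict_boundedE)
qed

end
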